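(* Let $d$, $n$, $r$ be positive integers with $\gcd(d,n)=1$ and $n$ odd. Then, modulo $(1-aq^{r+d\langle-r/d\rangle_n})(a-q^{d-r+d\langle (r-d)/d\rangle_n})$, $$ \sum_{k=0}^{n-1}\frac{2\,(aq^r;q^d)_k\,(q^{d-r}/a;q^d)_k\, q^{dk}}{(q^d;q^d)_{k}^2\,(1+q^{dk})} \equiv (-1)^{\langle-r/d\rangle_n}. $$
   Context: $a,q$ are indeterminates. The $q$-shifted factorial is $(y;q)_0=1$ and $(y;q)_m=(1-y)(1-yq)\cdots(1-yq^{m-1})$ for $m\geqslant1$. $\langle y\rangle_m$ denotes the least non-negative residue modulo $m$ of a rational number $y$ whose denominator is coprime to $m$. For rational functions $A,B$ and a polynomial $P$, $A\equiv B\pmod P$ means $A-B=P\cdot C/D$ for polynomials $C,D$ with $D$ coprime to $P$. *)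

theory Defs
  imports "HOL-Computational_Algebra.Computational_Algebra"
begin

text \<open>Rational functions in the indeterminates a, q over the rationals:
  the field of fractions of Q[q][a] (outer variable a, inner variable q).\<close>

type_synonym bipoly = "rat poly poly"
type_synonym ratfun = "rat poly poly fract"

definition var_a :: bipoly where "var_a = [:0, 1:]"
definition var_q :: bipoly where "var_q = [:[:0, 1:]:]"

definition fa :: ratfun where "fa = to_fract var_a"
definition fq :: ratfun where "fq = to_fract var_q"

definition qpoch :: "ratfun \<Rightarrow> ratfun \<Rightarrow> nat \<Rightarrow> ratfun" where
  "qpoch y b m = (\<Prod>i<m. 1 - y * b ^ i)"

definition lnr :: "rat \<Rightarrow> nat \<Rightarrow> nat" where
  "lnr y m = (THE k. k < m \<and> (\<exists>u v :: int. v \<noteq> 0 \<and> coprime v (int m) \<and>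
       y - of_nat k = of_int (int m * u) / of_int v))"

definition cong_rf :: "ratfun \<Rightarrow> ratfun \<Rightarrow> bipoly \<Rightarrow> bool" where
  "cong_rf A B P \<longleftrightarrow> (\<exists>C D :: bipoly. D \<noteq> 0 \<and> coprime D P \<and>
       A - B = to_fract P * to_fract C / to_fract D)"

end

theory Submission
  imports Defs "HOL-Computational_Algebra.Field_as_Ring" "HOL-Number_Theory.Cong"
begin

text \<open>
  For a generic base Q the terminating sums
    S_J = sum_{k<N} 2 (Q^-J;Q)_k (Q^(J+1);Q)_k Q^k / ((Q;Q)_k^2 (1 + Q^k))
  equal (-1)^J for J < N: only the term k = 0 of S_0 survives, and S_(J+1) + S_J is twice
  a sum of (Q^-M;Q)_k (Q^M;Q)_k Q^k / (Q;Q)_k^2 with M = J + 1, which telescopes to a product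
  containing the factor 1 - Q^-M Q^M = 0.

  Write T(a) for the sum of the theorem and Q = q^d. At a = q^-(r+dj) and at a = q^e2 it
  becomes S_j and S_(n-1-j), which are equal since n is odd. Hence a^(n-1) (T(a) - (-1)^j),
  a polynomial in a over Q(q), is divisible by the two linear factors; the denominators left
  over are a power of a times a polynomial in q, hence coprime to the modulus.
\<close>

lemma qpoch_0 [simp]: "qpoch y b 0 = 1"
  by (simp add: qpoch_def)

lemma qpoch_Suc: "qpoch y b (Suc m) = qpoch y b m * (1 - y * b ^ m)"
  by (simp add: qpoch_def)

lemma qpoch_Suc_shift: "qpoch y b (Suc m) = (1 - y) * qpoch (y * b) b m"
  unfolding qpoch_def by (subst prod.lessThan_Suc_shift) (simp add: mult.assoc power_commutes)

lemma qpoch_eq_0: "y * b ^ i = 1 \<Longrightarrow> i < m \<Longrightarrow> qpoch y b m = 0"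
  unfolding qpoch_def by (intro prod_zero) auto

definition sign_term :: "ratfun \<Rightarrow> nat \<Rightarrow> nat \<Rightarrow> ratfun" where
  "sign_term Q J k = 2 * qpoch (inverse (Q ^ J)) Q k * qpoch (Q ^ Suc J) Q k * Q ^ k
      / ((qpoch Q Q k)\<^sup>2 * (1 + Q ^ k))"

definition balanced_term :: "ratfun \<Rightarrow> nat \<Rightarrow> nat \<Rightarrow> ratfun" where
  "balanced_term Q M k = qpoch (inverse (Q ^ M)) Q k * qpoch (Q ^ M) Q k * Q ^ k / (qpoch Q Q k)\<^sup>2"

locale q_generic =
  fixes Q :: ratfun
  assumes nonzero: "Q \<noteq> 0"
    and not_root_of_unity: "i > 0 \<Longrightarrow> Q ^ i \<noteq> 1"
begin

lemma qpoch_self_nonzero: "qpoch Q Q k \<noteq> 0"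
proof (induction k)
  case (Suc k)
  have "Q * Q ^ k \<noteq> 1" using not_root_of_unity[of "Suc k"] by simp
  with Suc show ?case by (simp add: qpoch_Suc)
qed simp

lemma one_plus_power_nonzero: "1 + Q ^ k \<noteq> 0"
proof
  assume "1 + Q ^ k = 0"
  then have "Q ^ k = -1" by (simp add: eq_neg_iff_add_eq_0 add.commute)
  then have "Q ^ (2 * k) = 1" by (simp add: mult.commute[of 2] power_mult)
  then have "k = 0" using not_root_of_unity[of "2 * k"] by (cases "k = 0") auto
  with \<open>1 + Q ^ k = 0\<close> show False by simp
qed

lemma sign_term_add:
  "sign_term Q (Suc J) k + sign_term Q J k = 2 * balanced_term Q (Suc J) k"
proof (cases k)
  case 0
  then show ?thesis by (simp add: sign_term_def balanced_term_def)
next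
  case (Suc i)
  define y where "y = Q ^ Suc J"
  define x where "x = Q ^ k"
  define P1 where "P1 = qpoch (inverse (Q ^ J)) Q i"
  define P2 where "P2 = qpoch (Q * y) Q i"
  define D where "D = qpoch Q Q k"
  have y: "y \<noteq> 0" using nonzero by (simp add: y_def)
  have x: "x = Q * Q ^ i" by (simp add: x_def Suc)
  have Q2: "Q ^ Suc (Suc J) = Q * y" by (simp add: y_def)
  have e1: "qpoch (inverse y) Q k = (1 - inverse y) * P1"
    unfolding Suc qpoch_Suc_shift P1_def y_def using nonzero by (simp add: field_simps)
  have e2: "qpoch (inverse (Q ^ J)) Q k = P1 * (1 - inverse y * x)"
    unfolding Suc qpoch_Suc P1_def y_def x using nonzero by (simp add: field_simps)
  have e3: "qpoch (Q * y) Q k = P2 * (1 - y * x)"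
    unfolding Suc qpoch_Suc P2_def x by (simp add: mult_ac)
  have e4: "qpoch y Q k = (1 - y) * P2"
    unfolding Suc qpoch_Suc_shift P2_def by (simp add: mult_ac)
  have bracket: "(1 - inverse y) * (1 - y * x) + (1 - y) * (1 - inverse y * x)
      = (1 - inverse y) * (1 - y) * (1 + x)"
    using y by (simp add: field_simps)
  have "sign_term Q (Suc J) k + sign_term Q J k
      = 2 * P1 * P2 * x * ((1 - inverse y) * (1 - y * x) + (1 - y) * (1 - inverse y * x))
        / (D\<^sup>2 * (1 + x))"
    unfolding sign_term_def Q2 y_def[symmetric] x_def[symmetric] D_def[symmetric] e1 e2 e3 e4
    by (simp add: add_divide_distrib[symmetric] algebra_simps)
  also have "\<dots> = 2 * balanced_term Q (Suc J) k"
    unfolding bracket balanced_term_def y_def[symmetric] x_def[symmetric] D_def[symmetric] e1 e4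
    using one_plus_power_nonzero[of k] by (simp add: x_def)
  finally show ?thesis .
qed

lemma sum_qpoch_reciprocal_pair:
  assumes ab: "a * b = 1"
  shows "(\<Sum>k\<le>K. qpoch a Q k * qpoch b Q k * Q ^ k / (qpoch Q Q k)\<^sup>2)
    = qpoch (a * Q) Q K * qpoch (b * Q) Q K / (qpoch Q Q K)\<^sup>2"
proof (induction K)
  case (Suc K)
  define A where "A = qpoch (a * Q) Q K"
  define B where "B = qpoch (b * Q) Q K"
  define D where "D = qpoch Q Q K"
  define w where "w = Q ^ Suc K"
  have D: "D \<noteq> 0" using qpoch_self_nonzero by (simp add: D_def)
  have w: "1 - w \<noteq> 0" using not_root_of_unity[of "Suc K"] by (simp add: w_def)
  have "A * B / D\<^sup>2 = A * B * (1 - w)\<^sup>2 / (D * (1 - w))\<^sup>2"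
    using D w by (simp add: power_mult_distrib)
  moreover have "A * B * (1 - w)\<^sup>2 + (1 - a) * A * ((1 - b) * B) * w
      = A * (1 - a * w) * (B * (1 - b * w))"
    using ab by algebra
  ultimately have "A * B / D\<^sup>2 + (1 - a) * A * ((1 - b) * B) * w / (D * (1 - w))\<^sup>2
      = A * (1 - a * w) * (B * (1 - b * w)) / (D * (1 - w))\<^sup>2"
    by (simp add: add_divide_distrib[symmetric])
  moreover have "(\<Sum>k\<le>Suc K. qpoch a Q k * qpoch b Q k * Q ^ k / (qpoch Q Q k)\<^sup>2)
      = A * B / D\<^sup>2 + (1 - a) * A * ((1 - b) * B) * w / (D * (1 - w))\<^sup>2"
    unfolding sum.atMost_Suc Suc.IH qpoch_Suc_shift[of a] qpoch_Suc_shift[of b] qpoch_Suc[of Q]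
    by (simp add: A_def B_def D_def w_def mult_ac)
  ultimately show ?case
    by (simp add: qpoch_Suc A_def B_def D_def w_def mult_ac)
qed simp

lemma sum_balanced_term:
  assumes "0 < M" "M < N"
  shows "(\<Sum>k<N. balanced_term Q M k) = 0"
proof -
  have QM: "Q ^ M \<noteq> 0" using nonzero by simp
  have "{..<N} = {..N - 1}" using assms by auto
  then have "(\<Sum>k<N. balanced_term Q M k)
      = qpoch (inverse (Q ^ M) * Q) Q (N - 1) * qpoch (Q ^ M * Q) Q (N - 1) / (qpoch Q Q (N - 1))\<^sup>2"
    unfolding balanced_term_def using QM by (simp add: sum_qpoch_reciprocal_pair)
  moreover have "qpoch (inverse (Q ^ M) * Q) Q (N - 1) = 0"
  proof (rule qpoch_eq_0)
    show "inverse (Q ^ M) * Q * Q ^ (M - 1) = 1"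
      using QM \<open>0 < M\<close> by (simp add: mult.assoc power_Suc[symmetric])
  qed (use assms in simp)
  ultimately show ?thesis by simp
qed

theorem sum_sign_term: "J < N \<Longrightarrow> (\<Sum>k<N. sign_term Q J k) = (-1) ^ J"
proof (induction J)
  case 0
  have "sign_term Q 0 k = 0" if "k > 0" for k
    using qpoch_eq_0[of 1 Q 0 k] that by (simp add: sign_term_def)
  then have "(\<Sum>k<N. sign_term Q 0 k) = sign_term Q 0 0"
    using 0 by (intro sum.mono_neutral_right[where S = "{0}", simplified]) auto
  then show ?case by (simp add: sign_term_def)
next
  case (Suc J)
  have "(\<Sum>k<N. sign_term Q (Suc J) k) + (\<Sum>k<N. sign_term Q J k)
      = 2 * (\<Sum>k<N. balanced_term Q (Suc J) k)"
    by (simp add: sum.distrib[symmetric] sum_distrib_left sign_term_add)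
  also have "\<dots> = 0" using sum_balanced_term[of "Suc J" N] Suc.prems by simp
  finally show ?case using Suc by (simp add: eq_neg_iff_add_eq_0[symmetric])
qed

end

lemma to_fract_power: "to_fract (x ^ n) = to_fract x ^ n"
  by (induction n) simp_all

lemma var_q_power: "var_q ^ m = [:[:0, 1:] ^ m:]"
  unfolding var_q_def by (induction m) simp_all

lemma fq_power: "fq ^ m = to_fract (var_q ^ m)"
  by (simp add: fq_def to_fract_power)

lemma fq_nonzero [simp]: "fq \<noteq> 0"
  by (simp add: fq_def var_q_def)

lemma fa_nonzero [simp]: "fa \<noteq> 0"
  by (simp add: fa_def var_a_def)

lemma fq_power_eq_1_iff: "fq ^ m = 1 \<longleftrightarrow> m = 0"
proof
  assume "fq ^ m = 1"
  then have "([:0, 1:] :: rat poly) ^ m = 1"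
    by (simp add: fq_power var_q_power one_pCons flip: to_fract_1)
  then have "degree (([:0, 1:] :: rat poly) ^ m) = 0" by simp
  then show "m = 0" using degree_linear_power[of "0 :: rat" m] by simp
qed simp

lemma fq_power_int_eq_1_iff: "fq powi k = 1 \<longleftrightarrow> k = 0"
  by (cases "k \<ge> 0") (auto simp: power_int_def fq_power_eq_1_iff power_inverse)

lemma q_generic_fq_power: "0 < d \<Longrightarrow> q_generic (fq ^ d)"
  by unfold_locales (simp_all add: power_mult[symmetric] fq_power_eq_1_iff)

definition const_a :: "rat poly \<Rightarrow> ratfun" where
  "const_a u = to_fract [:u:]"

lemma const_a_0 [simp]: "const_a 0 = 0"
  and const_a_1 [simp]: "const_a 1 = 1"
  and const_a_add: "const_a (u + v) = const_a u + const_a v"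
  and const_a_mult: "const_a (u * v) = const_a u * const_a v"
  and const_a_uminus: "const_a (- u) = - const_a u"
  and const_a_eq_0_iff [simp]: "const_a u = 0 \<longleftrightarrow> u = 0"
  by (simp_all add: const_a_def one_pCons[symmetric] flip: to_fract_add to_fract_mult to_fract_uminus)

definition a_free :: "ratfun \<Rightarrow> bool" where
  "a_free z \<longleftrightarrow> (\<exists>u v. v \<noteq> 0 \<and> z = const_a u / const_a v)"

lemma a_free_const_a: "a_free (const_a u)"
  unfolding a_free_def by (intro exI[of _ u] exI[of _ 1]) simp

lemma a_free_0 [simp]: "a_free 0" and a_free_1 [simp]: "a_free 1"
  using a_free_const_a[of 0] a_free_const_a[of 1] by simp_all

lemma a_free_add: assumes "a_free x" "a_free y" shows "a_free (x + y)"
proof -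
  obtain u1 v1 u2 v2 where "v1 \<noteq> 0" "x = const_a u1 / const_a v1"
    and "v2 \<noteq> 0" "y = const_a u2 / const_a v2"
    using assms unfolding a_free_def by blast
  then have "x + y = const_a (u1 * v2 + u2 * v1) / const_a (v1 * v2)"
    by (simp add: const_a_add const_a_mult field_simps)
  with \<open>v1 \<noteq> 0\<close> \<open>v2 \<noteq> 0\<close> show ?thesis unfolding a_free_def by (metis mult_eq_0_iff)
qed

lemma a_free_mult: assumes "a_free x" "a_free y" shows "a_free (x * y)"
proof -
  obtain u1 v1 u2 v2 where "v1 \<noteq> 0" "x = const_a u1 / const_a v1"
    and "v2 \<noteq> 0" "y = const_a u2 / const_a v2"
    using assms unfolding a_free_def by blast
  then have "x * y = const_a (u1 * u2) / const_a (v1 * v2)"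
    by (simp add: const_a_mult)
  with \<open>v1 \<noteq> 0\<close> \<open>v2 \<noteq> 0\<close> show ?thesis unfolding a_free_def by (metis mult_eq_0_iff)
qed

lemma a_free_uminus: "a_free x \<Longrightarrow> a_free (- x)"
  unfolding a_free_def by (metis const_a_uminus minus_divide_left)

lemma a_free_inverse: assumes "a_free x" shows "a_free (inverse x)"
proof -
  obtain u v where "v \<noteq> 0" "x = const_a u / const_a v"
    using assms unfolding a_free_def by blast
  show ?thesis
  proof (cases "u = 0")
    case False
    have "inverse x = const_a v / const_a u" using \<open>x = const_a u / const_a v\<close> by simp
    with False show ?thesis unfolding a_free_def by blast
  qed (use \<open>x = const_a u / const_a v\<close> in simp)
qed

lemma a_free_diff: "a_free x \<Longrightarrow> a_free y \<Longrightarrow> a_free (x - y)"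
  using a_free_add[of x "- y"] a_free_uminus[of y] by simp

lemma a_free_divide: "a_free x \<Longrightarrow> a_free y \<Longrightarrow> a_free (x / y)"
  using a_free_mult[of x "inverse y"] a_free_inverse[of y] by (simp add: divide_inverse)

lemma a_free_power: "a_free x \<Longrightarrow> a_free (x ^ n)"
  by (induction n) (auto intro: a_free_mult)

lemma a_free_power_int: "a_free x \<Longrightarrow> a_free (x powi k)"
  by (auto simp: power_int_def intro: a_free_power a_free_inverse)

lemma a_free_sum: "(\<And>i. i \<in> A \<Longrightarrow> a_free (f i)) \<Longrightarrow> a_free (sum f A)"
  by (induction A rule: infinite_finite_induct) (auto intro: a_free_add)

lemma a_free_prod: "(\<And>i. i \<in> A \<Longrightarrow> a_free (f i)) \<Longrightarrow> a_free (prod f A)"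
  by (induction A rule: infinite_finite_induct) (auto intro: a_free_mult)

lemma a_free_numeral: "a_free (numeral k)"
  using a_free_sum[of "{..<numeral k :: nat}" "\<lambda>_. 1"] by simp

lemma a_free_fq: "a_free fq"
  unfolding fq_def var_q_def const_a_def[symmetric] by (rule a_free_const_a)

lemma a_free_qpoch: "a_free y \<Longrightarrow> a_free b \<Longrightarrow> a_free (qpoch y b m)"
  unfolding qpoch_def by (intro a_free_prod a_free_diff a_free_mult a_free_power a_free_1)

definition a_free_coeffs :: "ratfun poly \<Rightarrow> bool" where
  "a_free_coeffs p \<longleftrightarrow> (\<forall>i. a_free (coeff p i))"

lemma a_free_coeffs_0 [simp]: "a_free_coeffs 0"
  by (simp add: a_free_coeffs_def)

lemma a_free_coeffs_pCons_iff [simp]: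
  "a_free_coeffs (pCons c p) \<longleftrightarrow> a_free c \<and> a_free_coeffs p"
  unfolding a_free_coeffs_def by (metis coeff_pCons_0 coeff_pCons_Suc not0_implies_Suc)

lemma a_free_coeffs_diff: "a_free_coeffs p \<Longrightarrow> a_free_coeffs q \<Longrightarrow> a_free_coeffs (p - q)"
  unfolding a_free_coeffs_def by (auto intro: a_free_diff)

lemma a_free_coeffs_add: "a_free_coeffs p \<Longrightarrow> a_free_coeffs q \<Longrightarrow> a_free_coeffs (p + q)"
  unfolding a_free_coeffs_def by (auto intro: a_free_add)

lemma a_free_coeffs_mult: "a_free_coeffs p \<Longrightarrow> a_free_coeffs q \<Longrightarrow> a_free_coeffs (p * q)"
  unfolding a_free_coeffs_def coeff_mult by (auto intro!: a_free_sum a_free_mult)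

lemma a_free_coeffs_smult: "a_free c \<Longrightarrow> a_free_coeffs p \<Longrightarrow> a_free_coeffs (smult c p)"
  unfolding a_free_coeffs_def by (auto intro: a_free_mult)

lemma a_free_coeffs_monom: "a_free c \<Longrightarrow> a_free_coeffs (monom c n)"
  unfolding a_free_coeffs_def by auto

lemma a_free_coeffs_sum: "(\<And>i. i \<in> A \<Longrightarrow> a_free_coeffs (f i)) \<Longrightarrow> a_free_coeffs (sum f A)"
  by (induction A rule: infinite_finite_induct) (auto intro: a_free_coeffs_add)

lemma a_free_coeffs_prod: "(\<And>i. i \<in> A \<Longrightarrow> a_free_coeffs (f i)) \<Longrightarrow> a_free_coeffs (prod f A)"
  by (induction A rule: infinite_finite_induct) (auto intro: a_free_coeffs_mult simp: one_pCons)

lemma a_free_poly: "a_free_coeffs p \<Longrightarrow> a_free c \<Longrightarrow> a_free (poly p c)"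
  by (induction p) (auto intro: a_free_add a_free_mult)

lemma a_free_coeffs_synthetic_div:
  "a_free_coeffs p \<Longrightarrow> a_free c \<Longrightarrow> a_free_coeffs (synthetic_div p c)"
  by (induction p) (auto intro: a_free_poly)

lemma poly_a_free_coeffs_at_fa:
  "a_free_coeffs p \<Longrightarrow> \<exists>C v. v \<noteq> 0 \<and> poly p fa = to_fract C / const_a v"
proof (induction p)
  case 0
  show ?case by (intro exI[of _ 0] exI[of _ 1]) simp
next
  case (pCons c p)
  then obtain C v where "v \<noteq> 0" "poly p fa = to_fract C / const_a v" by auto
  moreover obtain u w where "w \<noteq> 0" "c = const_a u / const_a w"
    using pCons.prems by (auto simp: a_free_def)
  ultimately have "poly (pCons c p) fa = (const_a u * const_a v + fa * to_fract C * const_a w) / const_a (w * v)"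
    by (simp add: const_a_mult field_simps)
  also have "\<dots> = to_fract ([:u * v:] + var_a * C * [:w:]) / const_a (w * v)"
    by (simp add: fa_def const_a_def flip: to_fract_mult to_fract_add)
  finally show ?case using \<open>v \<noteq> 0\<close> \<open>w \<noteq> 0\<close> by (metis mult_eq_0_iff)
qed

lemma fq_power_const_a: "fq ^ s = const_a ([:0, 1:] ^ s)"
  by (simp add: fq_power var_q_power const_a_def)

lemma coprime_const_poly:
  fixes c :: "rat poly" and P :: bipoly
  assumes "c \<noteq> 0" "is_unit (coeff P i)"
  shows "coprime [:c:] P"
proof (rule coprimeI)
  fix g assume g: "g dvd [:c:]" "g dvd P"
  then have "degree g = 0" using dvd_imp_degree_le[of g "[:c:]"] assms(1) by simp
  then have g_const: "g = [:coeff g 0:]" by (metis degree_0_id)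
  then have "coeff g 0 dvd coeff P i" using g(2) const_poly_dvd_iff by metis
  then have "is_unit (coeff g 0)" using assms(2) dvd_unit_imp_unit by blast
  then show "is_unit g" using g_const is_unit_const_poly_iff by metis
qed

lemma coprime_var_a:
  fixes P :: bipoly
  assumes "coeff P 0 \<noteq> 0"
  shows "coprime var_a P"
proof (rule coprimeI)
  fix g assume g: "g dvd var_a" "g dvd P"
  obtain c R where P: "P = pCons c R" by (cases P)
  have "P - var_a * R = [:coeff P 0:]" by (simp add: P var_a_def)
  with g have "g dvd [:coeff P 0:]" by (metis dvd_diff dvd_mult2)
  moreover have "coprime [:coeff P 0:] var_a"
    using assms by (intro coprime_const_poly[of _ _ 1]) (simp_all add: var_a_def)
  ultimately show "is_unit g" using g(1) coprime_common_divisor by blast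
qed

text \<open>The polynomial a - q^e, multiplied by q^-e when e < 0.\<close>

definition lin_factor :: "int \<Rightarrow> bipoly" where
  "lin_factor e = var_a * var_q ^ nat (- e) - var_q ^ nat e"

lemma lin_factor_eq: "lin_factor e = [:- ([:0, 1:] ^ nat e), [:0, 1:] ^ nat (- e):]"
  by (simp add: lin_factor_def var_a_def var_q_power)

lemma coprime_lin_factor:
  assumes "c \<noteq> 0"
  shows "coprime ([:c:] * var_a ^ m) (lin_factor e)"
proof -
  have "is_unit (coeff (lin_factor e) 0) \<or> is_unit (coeff (lin_factor e) 1)"
    by (cases "e \<ge> 0") (simp_all add: lin_factor_eq)
  then have "coprime [:c:] (lin_factor e)"
    using assms coprime_const_poly by blast
  moreover have "coprime var_a (lin_factor e)"
    by (rule coprime_var_a) (simp add: lin_factor_eq)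
  ultimately show ?thesis
    by (metis coprime_mult_left_iff coprime_power_left_iff)
qed

lemma fa_minus_fq_power_int: "fa - fq powi e = to_fract (lin_factor e) / fq ^ nat (- e)"
  using fq_nonzero[unfolded fq_def] by (cases "e \<ge> 0")
    (simp_all add: lin_factor_def fa_def fq_power power_int_def to_fract_power field_simps)

lemma cong_rf_of_vanishing:
  assumes V: "a_free_coeffs V"
    and roots: "poly V (fq powi e1) = 0" "poly V (fq powi e2) = 0" "e1 \<noteq> e2"
    and V_fa: "poly V fa = fa ^ m * (A - B)"
  shows "cong_rf A B (lin_factor e1 * lin_factor e2)"
proof -
  define c1 c2 where "c1 = fq powi e1" and "c2 = fq powi e2"
  have "c1 \<noteq> c2"
  proof
    assume "c1 = c2"
    then have "fq powi (e1 - e2) = 1" by (simp add: c1_def c2_def power_int_diff)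
    with roots(3) show False by (simp add: fq_power_int_eq_1_iff)
  qed
  define V1 where "V1 = synthetic_div V c1"
  define W where "W = synthetic_div V1 c2"
  have V1: "V = [:-c1, 1:] * V1"
    using synthetic_div_correct'[of c1 V] roots(1) by (simp add: V1_def c1_def)
  with roots(2) \<open>c1 \<noteq> c2\<close> have "poly V1 c2 = 0" by (simp add: c2_def)
  then have W: "V1 = [:-c2, 1:] * W"
    using synthetic_div_correct'[of c2 V1] by (simp add: W_def)
  have "a_free c1" "a_free c2"
    unfolding c1_def c2_def by (simp_all add: a_free_power_int a_free_fq)
  then have "a_free_coeffs W"
    unfolding W_def V1_def by (intro a_free_coeffs_synthetic_div V)
  then obtain C v where "v \<noteq> 0" and W_fa: "poly W fa = to_fract C / const_a v"
    using poly_a_free_coeffs_at_fa by blast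
  define s1 s2 where "s1 = nat (- e1)" and "s2 = nat (- e2)"
  define D where "D = [:[:0, 1:] ^ (s1 + s2) * v:] * var_a ^ m"
  have "A - B = poly V fa / fa ^ m" using V_fa by simp
  also have "\<dots> = (fa - c1) * (fa - c2) * poly W fa / fa ^ m"
    by (simp add: V1 W algebra_simps)
  also have "\<dots> = to_fract (lin_factor e1) * to_fract (lin_factor e2) * to_fract C
      / (const_a ([:0, 1:] ^ s1) * const_a ([:0, 1:] ^ s2) * const_a v * fa ^ m)"
    unfolding c1_def c2_def fa_minus_fq_power_int W_fa s1_def[symmetric] s2_def[symmetric]
    using \<open>v \<noteq> 0\<close> by (simp add: fq_power_const_a)
  also have "const_a ([:0, 1:] ^ s1) * const_a ([:0, 1:] ^ s2) * const_a v * fa ^ m = to_fract D"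
    unfolding D_def to_fract_mult to_fract_power power_add const_a_mult[symmetric]
    by (simp only: const_a_def fa_def)
  also have "to_fract (lin_factor e1) * to_fract (lin_factor e2) = to_fract (lin_factor e1 * lin_factor e2)"
    by simp
  finally have "A - B = to_fract (lin_factor e1 * lin_factor e2) * to_fract C / to_fract D" .
  moreover have "coprime D (lin_factor e1 * lin_factor e2)"
    unfolding D_def coprime_mult_right_iff
    using \<open>v \<noteq> 0\<close> by (intro conjI coprime_lin_factor) simp_all
  moreover have "D \<noteq> 0" using \<open>v \<noteq> 0\<close> by (simp add: D_def var_a_def)
  ultimately show ?thesis unfolding cong_rf_def by blast
qed

lemma cong_rf_uminus_modulus: "cong_rf A B (- P) \<longleftrightarrow> cong_rf A B P"
proof -
  have "to_fract (- P) * to_fract C = to_fract P * to_fract (- C)" for C by simp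
  then show ?thesis
    unfolding cong_rf_def coprime_minus_right_iff
    by (metis (no_types, opaque_lifting) minus_minus)
qed

lemma coprime_exists_dvd_add_mult:
  fixes d n r :: nat
  assumes "0 < n" "coprime d n"
  shows "\<exists>j<n. n dvd r + d * j"
proof -
  obtain x where x: "[d * x = 1] (mod n)" using cong_solve_coprime_nat[OF assms(2)] by auto
  define j where "j = (n - 1) * r * x mod n"
  have "[r + d * j = r + (n - 1) * r * (d * x)] (mod n)"
    unfolding j_def by (intro cong_add cong_refl) (simp add: cong_def mod_mult_right_eq mult_ac)
  also have "[r + (n - 1) * r * (d * x) = r + (n - 1) * r * 1] (mod n)"
    by (intro cong_add cong_mult cong_refl x)
  also have "r + (n - 1) * r * 1 = n * r" using assms(1) by (cases n) simp_all
  also have "[n * r = 0] (mod n)" by (simp add: cong_0_iff)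
  finally have "n dvd r + d * j" by (simp add: cong_0_iff)
  moreover have "j < n" using assms(1) by (simp add: j_def)
  ultimately show ?thesis by blast
qed

lemma lnr_eqI:
  assumes "k < m" "v \<noteq> 0" "coprime v (int m)" "y - of_nat k = of_int (int m * u) / of_int v"
  shows "lnr y m = k"
  unfolding lnr_def
proof (rule the_equality)
  show "k < m \<and> (\<exists>u v. v \<noteq> 0 \<and> coprime v (int m) \<and> y - of_nat k = of_int (int m * u) / of_int v)"
    using assms by blast
next
  fix k' assume "k' < m \<and> (\<exists>u v. v \<noteq> 0 \<and> coprime v (int m) \<and> y - of_nat k' = of_int (int m * u) / of_int v)"
  then obtain u' v' where k': "k' < m" "v' \<noteq> 0" "coprime v' (int m)"
    "y - of_nat k' = of_int (int m * u') / of_int v'"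
    by blast
  have "(of_nat k - of_nat k' :: rat) = of_int (int m * u') / of_int v' - of_int (int m * u) / of_int v"
    using assms(4) k'(4) by (simp add: algebra_simps)
  then have "(of_int ((int k - int k') * (v * v')) :: rat) = of_int (int m * (u' * v - u * v'))"
    using assms(2) k'(2) by (simp add: field_simps)
  then have "int m dvd (int k - int k') * (v * v')"
    unfolding of_int_eq_iff by simp
  moreover have "coprime (int m) (v * v')"
    using assms(3) k'(3) by (simp add: coprime_commute)
  ultimately have "int m dvd int k - int k'"
    using coprime_dvd_mult_left_iff by blast
  then have "[k = k'] (mod m)"
    by (simp add: cong_iff_dvd_diff flip: cong_int_iff)
  then show "k' = k" using cong_less_modulus_unique_nat assms(1) k'(1) by metis
qed

lemma lnr_residues:
  fixes d n r :: nat
  assumes "0 < d" "0 < n" "coprime d n"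
  defines "j \<equiv> lnr (- of_nat r / of_nat d) n"
  shows "j < n" and "lnr ((of_nat r - of_nat d) / of_nat d) n = n - 1 - j"
proof -
  obtain j' t where j': "j' < n" "r + d * j' = n * t"
    using coprime_exists_dvd_add_mult[OF assms(2,3), of r] by auto
  then have rat_eq: "(of_nat r + of_nat d * of_nat j' :: rat) = of_nat n * of_nat t"
    by (metis of_nat_add of_nat_mult)
  have coprime_dn: "coprime (int d) (int n)" using assms(3) by simp
  have "j = j'"
    unfolding j_def
  proof (rule lnr_eqI[where v = "int d" and u = "- int t"])
    show "- of_nat r / of_nat d - of_nat j' = (of_int (int n * - int t) / of_int (int d) :: rat)"
      using rat_eq assms(1) by (simp add: field_simps)
  qed (use j' assms(1) coprime_dn in auto)
  moreover have "lnr ((of_nat r - of_nat d) / of_nat d) n = n - 1 - j'"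
  proof (rule lnr_eqI[where v = "int d" and u = "int t - int d"])
    show "(of_nat r - of_nat d) / of_nat d - of_nat (n - 1 - j')
        = (of_int (int n * (int t - int d)) / of_int (int d) :: rat)"
      using rat_eq assms(1) j'(1) by (simp add: field_simps)
  qed (use j' assms(1) coprime_dn in auto)
  ultimately show "j < n" "lnr ((of_nat r - of_nat d) / of_nat d) n = n - 1 - j"
    using j'(1) by simp_all
qed

definition truncated_sum :: "nat \<Rightarrow> nat \<Rightarrow> nat \<Rightarrow> ratfun \<Rightarrow> ratfun" where
  "truncated_sum d r n y = (\<Sum>k<n. 2 * qpoch (y * fq ^ r) (fq ^ d) k
      * qpoch (fq powi (int d - int r) / y) (fq ^ d) k * fq ^ (d * k)
      / ((qpoch (fq ^ d) (fq ^ d) k)\<^sup>2 * (1 + fq ^ (d * k))))"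

lemma truncated_sum_at_power:
  assumes "0 < d" "J < n" "int r + k = - int (d * J) \<or> int r + k = int (d * Suc J)"
  shows "truncated_sum d r n (fq powi k) = (-1) ^ J"
proof -
  interpret q_generic "fq ^ d" using q_generic_fq_power assms(1) .
  have "fq powi k * fq ^ r = fq powi (int r + k)"
    and "fq powi (int d - int r) / fq powi k = fq powi (int d - (int r + k))"
    by (simp_all add: power_int_add power_int_diff)
  moreover have "fq powi (- int (d * J)) = inverse ((fq ^ d) ^ J)"
    and "fq powi (int (d * Suc J)) = (fq ^ d) ^ Suc J"
    by (simp_all only: power_int_minus power_int_of_nat power_mult)
  moreover have "fq ^ (d * i) = (fq ^ d) ^ i" for i by (simp add: power_mult)
  ultimately have "truncated_sum d r n (fq powi k) = (\<Sum>k<n. sign_term (fq ^ d) J k)"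
    using assms(3) unfolding truncated_sum_def sign_term_def
    by (auto simp: mult_ac intro!: sum.cong)
  then show ?thesis using sum_sign_term assms(2) by simp
qed

definition qpoch_poly :: "ratfun \<Rightarrow> ratfun \<Rightarrow> nat \<Rightarrow> ratfun poly" where
  "qpoch_poly x b k = (\<Prod>i<k. [:1, - (x * b ^ i):])"

definition qpoch_recip_poly :: "ratfun \<Rightarrow> ratfun \<Rightarrow> nat \<Rightarrow> ratfun poly" where
  "qpoch_recip_poly x b k = (\<Prod>i<k. [:- (x * b ^ i), 1:])"

lemma poly_qpoch_poly: "poly (qpoch_poly x b k) y = qpoch (y * x) b k"
  unfolding qpoch_poly_def qpoch_def poly_prod by (intro prod.cong) (simp_all add: algebra_simps)

lemma poly_qpoch_recip_poly:
  assumes "y \<noteq> 0"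
  shows "poly (qpoch_recip_poly x b k) y = y ^ k * qpoch (x / y) b k"
proof -
  have "poly (qpoch_recip_poly x b k) y = (\<Prod>i<k. y * (1 - x / y * b ^ i))"
    unfolding qpoch_recip_poly_def poly_prod using assms by (intro prod.cong) (simp_all add: field_simps)
  then show ?thesis by (simp add: qpoch_def prod.distrib)
qed

lemma a_free_coeffs_qpoch_poly: "a_free x \<Longrightarrow> a_free b \<Longrightarrow> a_free_coeffs (qpoch_poly x b k)"
  unfolding qpoch_poly_def
  by (intro a_free_coeffs_prod a_free_coeffs_pCons_iff[THEN iffD2] a_free_coeffs_0 conjI
      a_free_1 a_free_uminus a_free_mult a_free_power)

lemma a_free_coeffs_qpoch_recip_poly:
  "a_free x \<Longrightarrow> a_free b \<Longrightarrow> a_free_coeffs (qpoch_recip_poly x b k)"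
  unfolding qpoch_recip_poly_def
  by (intro a_free_coeffs_prod a_free_coeffs_pCons_iff[THEN iffD2] a_free_coeffs_0 conjI
      a_free_1 a_free_uminus a_free_mult a_free_power)

definition truncated_sum_poly :: "nat \<Rightarrow> nat \<Rightarrow> nat \<Rightarrow> ratfun poly" where
  "truncated_sum_poly d r n = (\<Sum>k<n.
      smult (2 * fq ^ (d * k) / ((qpoch (fq ^ d) (fq ^ d) k)\<^sup>2 * (1 + fq ^ (d * k))))
        (qpoch_poly (fq ^ r) (fq ^ d) k * qpoch_recip_poly (fq powi (int d - int r)) (fq ^ d) k
          * monom 1 (n - 1 - k)))"

lemma a_free_coeffs_truncated_sum_poly: "a_free_coeffs (truncated_sum_poly d r n)"
  unfolding truncated_sum_poly_def
  by (intro a_free_coeffs_sum a_free_coeffs_smult a_free_coeffs_mult a_free_coeffs_monom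
      a_free_coeffs_qpoch_poly a_free_coeffs_qpoch_recip_poly a_free_divide a_free_mult a_free_add
      a_free_power a_free_power_int a_free_qpoch a_free_numeral a_free_fq a_free_1)

lemma poly_truncated_sum_poly_term:
  assumes "y \<noteq> 0" "k < n"
  shows "poly (smult c (qpoch_poly x b k * qpoch_recip_poly z b k * monom 1 (n - 1 - k))) y
    = y ^ (n - 1) * (c * qpoch (y * x) b k * qpoch (z / y) b k)"
proof -
  have "y ^ (n - 1) = y ^ k * y ^ (n - 1 - k)" using assms(2) by (simp flip: power_add)
  then show ?thesis
    using assms(1) by (simp add: poly_qpoch_poly poly_qpoch_recip_poly poly_monom mult_ac)
qed

lemma poly_truncated_sum_poly:
  assumes "y \<noteq> 0"
  shows "poly (truncated_sum_poly d r n) y = y ^ (n - 1) * truncated_sum d r n y"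
  unfolding truncated_sum_poly_def truncated_sum_def poly_sum sum_distrib_left
  using assms by (intro sum.cong refl) (subst poly_truncated_sum_poly_term; simp add: mult_ac)

lemma cong_rf_truncated_sum:
  assumes "0 < d" "J < n" "K < n" "even J \<longleftrightarrow> even K"
    and "int r + e1 = - int (d * J)" "int r + e2 = int (d * Suc K)"
  shows "cong_rf (truncated_sum d r n fa) ((-1) ^ J) (lin_factor e1 * lin_factor e2)"
proof -
  have "truncated_sum d r n (fq powi e1) = (-1) ^ J"
    using assms(1,2,5) by (intro truncated_sum_at_power) simp_all
  moreover have "truncated_sum d r n (fq powi e2) = (-1) ^ K"
    using assms(1,3,6) by (intro truncated_sum_at_power) simp_all
  moreover have "(-1 :: ratfun) ^ K = (-1) ^ J"
    using assms(4) by (simp add: minus_one_power_iff)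
  ultimately have at_roots: "truncated_sum d r n (fq powi e1) = (-1) ^ J"
      "truncated_sum d r n (fq powi e2) = (-1) ^ J"
    by simp_all
  define V where "V = truncated_sum_poly d r n - monom ((-1) ^ J) (n - 1)"
  show ?thesis
  proof (rule cong_rf_of_vanishing[where V = V and m = "n - 1"])
    show "a_free_coeffs V" unfolding V_def
      by (intro a_free_coeffs_diff a_free_coeffs_truncated_sum_poly a_free_coeffs_monom
          a_free_power a_free_uminus a_free_1)
    show "poly V (fq powi e1) = 0" "poly V (fq powi e2) = 0"
      "poly V fa = fa ^ (n - 1) * (truncated_sum d r n fa - (-1) ^ J)"
      using at_roots by (simp_all add: V_def poly_truncated_sum_poly poly_monom algebra_simps)
    have "0 < int (d * Suc K)" using assms(1) by (simp only: of_nat_0_less_iff) simp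
    then show "e1 \<noteq> e2" using assms(5,6) by linarith
  qed
qed

theorem corollary1p4:
  fixes d n r :: nat
  assumes "d > 0" and "n > 0" and "r > 0" and "coprime d n" and "odd n"
  defines "j \<equiv> lnr (- of_nat r / of_nat d) n"
      and "e2 \<equiv> int d - int r + int d * int (lnr ((of_nat r - of_nat d) / of_nat d) n)"
  shows "cong_rf
     (\<Sum>k<n. 2 * qpoch (fa * fq ^ r) (fq ^ d) k * qpoch (fq powi (int d - int r) / fa) (fq ^ d) k
              * fq ^ (d * k) / ((qpoch (fq ^ d) (fq ^ d) k) ^ 2 * (1 + fq ^ (d * k))))
     ((-1) ^ j)
     ((1 - var_a * var_q ^ (r + d * j)) *
      (var_a * var_q ^ nat (- e2) - var_q ^ nat e2))"
proof -
  have j: "j < n" and residue: "lnr ((of_nat r - of_nat d) / of_nat d) n = n - 1 - j"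
    using lnr_residues[OF assms(1,2,4), of r, folded j_def] by simp_all
  define e1 where "e1 = - int (r + d * j)"
  have "cong_rf (truncated_sum d r n fa) ((-1) ^ j) (lin_factor e1 * lin_factor e2)"
  proof (rule cong_rf_truncated_sum[where K = "n - 1 - j"])
    show "even j \<longleftrightarrow> even (n - 1 - j)" using \<open>odd n\<close> j by presburger
    show "int r + e2 = int (d * Suc (n - 1 - j))" using j by (simp add: e2_def residue)
  qed (use assms(1) j in \<open>simp_all add: e1_def\<close>)
  moreover have "(1 - var_a * var_q ^ (r + d * j)) * (var_a * var_q ^ nat (- e2) - var_q ^ nat e2)
      = - (lin_factor e1 * lin_factor e2)"
    by (simp add: lin_factor_def e1_def algebra_simps del: of_nat_add of_nat_mult)
  ultimately show ?thesis by (simp add: cong_rf_uminus_modulus truncated_sum_def)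
qed

end
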